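(* Let $p$ be a prime, $k, r \geq 1$, $G_1, \dots, G_k$ finite-dimensional vector spaces over $\mathbb{F}_p$, $G^{\oplus} = G_1 \oplus \cdots \oplus G_k$ with each $G_i$ regarded as a subspace of $G^{\oplus}$, and $f \colon G^{\oplus} \to \mathbb{D}$. Let $\xi > 0$ and let $\psi \colon (G^{\oplus})^{r-1} \times G_1 \times \cdots \times G_k \to \mathbb{F}_p$ be a multilinear form such that \[\mathbb{E}_{a^{(1)}, \dots, a^{(r-1)} \in G^{\oplus},\ d_1 \in G_1, \dots, d_k \in G_k,\ x \in G^{\oplus}}\ \partial_{a^{(1)}} \cdots \partial_{a^{(r-1)}} \partial_{d_1} \cdots \partial_{d_k} f(x)\, \omega^{\psi(a^{(1)}, \dots, a^{(r-1)}, d_1, \dots, d_k)} \geq \xi,\] where $d_i \in G_i$ is viewed in $G^{\oplus}$. Let $i \in [r-1]$ and $j \in [k]$, and for $u \in G_j$ write $\iota_j(u) \in G^{\oplus}$ for the element with $j$-th component $u$ and all other components $0$. Define the multilinear form $\psi'_{ij} \colon (G^{\oplus})^{i-1} \times G_j \times (G^{\oplus})^{r-1-i} \times G_1 \times \cdots \times G_k \to \mathbb{F}_p$ by \begin{align*}\psi'_{ij}(a^{(1)}, \dots, a^{(i-1)}, u_j, a^{(i+1)}, \dots, a^{(r-1)}, d_1, \dots, d_k) =\ & \psi(a^{(1)}, \dots, a^{(i-1)}, \iota_j(u_j), a^{(i+1)}, \dots, a^{(r-1)}, d_1, \dots, d_{j-1}, d_j, d_{j+1}, \dots, d_k) \\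 &- \psi(a^{(1)}, \dots, a^{(i-1)}, \iota_j(d_j), a^{(i+1)}, \dots, a^{(r-1)}, d_1, \dots, d_{j-1}, u_j, d_{j+1}, \dots, d_k).\end{align*} Then $\operatorname{bias} \psi'_{ij} \geq \xi^8$.
   Context: $\mathbb{D} = \{z \in \mathbb{C} : |z| \leq 1\}$, $\omega = e^{2\pi i/p}$, $\mathbb{E}$ is the uniform average, $\partial_u f(x) = f(x+u)\overline{f(x)}$. For a multilinear form $\alpha$ on a product $V_1 \times \cdots \times V_s$ of $\mathbb{F}_p$-vector spaces, $\operatorname{bias}\alpha = \mathbb{E}_{v_1 \in V_1, \dots, v_s \in V_s} \omega^{\alpha(v_1, \dots, v_s)}$. *)

theory Defs
  imports "HOL-Analysis.Analysis" "Berlekamp_Zassenhaus.Finite_Field"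
begin

text \<open>A finite-dimensional F_p-space G_j is modelled as F_p^(n j).
  An element of the direct sum G_0 + ... + G_(k-1) is a function x with x j t the
  t-th coordinate of the j-th component (j < k, t < n j), and 0 outside this range.
  Each G_j is regarded (as in the paper) as the subspace of the direct sum whose
  components other than j vanish; so the embedding iota_j is the identity.\<close>

type_synonym 'p vec = "nat \<Rightarrow> nat \<Rightarrow> 'p mod_ring"

definition Gsum :: "(nat \<Rightarrow> nat) \<Rightarrow> nat \<Rightarrow> ('p::prime_card) vec set" where
  "Gsum n k = {x. \<forall>j t. (k \<le> j \<or> n j \<le> t) \<longrightarrow> x j t = 0}"

definition Gblock :: "(nat \<Rightarrow> nat) \<Rightarrow> nat \<Rightarrow> nat \<Rightarrow> ('p::prime_card) vec set" where
  "Gblock n k j = {x \<in> Gsum n k. \<forall>j' t. j' \<noteq> j \<longrightarrow> x j' t = 0}"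

definition vadd :: "('p::prime_card) vec \<Rightarrow> 'p vec \<Rightarrow> 'p vec" where
  "vadd x y = (\<lambda>j t. x j t + y j t)"

definition vscale :: "('p::prime_card) mod_ring \<Rightarrow> 'p vec \<Rightarrow> 'p vec" where
  "vscale c x = (\<lambda>j t. c * x j t)"

definition multilinear :: "('p::prime_card) vec set list \<Rightarrow> ('p vec list \<Rightarrow> 'p mod_ring) \<Rightarrow> bool" where
  "multilinear Vs \<alpha> \<longleftrightarrow>
     (\<forall>xs. list_all2 (\<in>) xs Vs \<longrightarrow>
       (\<forall>m < length Vs. \<forall>u \<in> Vs ! m. \<forall>v \<in> Vs ! m. \<forall>c.
          \<alpha> (xs[m := vadd u v]) = \<alpha> (xs[m := u]) + \<alpha> (xs[m := v]) \<and>
          \<alpha> (xs[m := vscale c u]) = c * \<alpha> (xs[m := u])))"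

definition omega_pow :: "('p::prime_card) mod_ring \<Rightarrow> complex" where
  "omega_pow a = exp (2 * of_real pi * \<i> * of_int (to_int_mod_ring a) / of_nat CARD('p))"

definition avg :: "'a set \<Rightarrow> ('a \<Rightarrow> complex) \<Rightarrow> complex" where
  "avg A g = (\<Sum>a\<in>A. g a) / of_nat (card A)"

definition bias :: "('p::prime_card) vec set list \<Rightarrow> ('p vec list \<Rightarrow> 'p mod_ring) \<Rightarrow> complex" where
  "bias Vs \<alpha> = avg (listset Vs) (\<lambda>xs. omega_pow (\<alpha> xs))"

definition mderiv :: "('p::prime_card) vec \<Rightarrow> ('p vec \<Rightarrow> complex) \<Rightarrow> 'p vec \<Rightarrow> complex" where
  "mderiv u f x = f (vadd x u) * cnj (f x)"

fun mderivs :: "('p::prime_card) vec list \<Rightarrow> ('p vec \<Rightarrow> complex) \<Rightarrow> 'p vec \<Rightarrow> complex" where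
  "mderivs [] f = f"
| "mderivs (u # us) f = mderiv u (mderivs us f)"

text \<open>psi'_{ij}: swap the argument in position i (among the first r-1) with the
  d_j argument (position r-1+j), and subtract.\<close>
definition psi_prime :: "nat \<Rightarrow> nat \<Rightarrow> nat \<Rightarrow> (('p::prime_card) vec list \<Rightarrow> 'p mod_ring) \<Rightarrow> 'p vec list \<Rightarrow> 'p mod_ring" where
  "psi_prime r i j \<psi> ys =
     \<psi> ys - \<psi> (ys[i := ys ! (r - 1 + j), r - 1 + j := ys ! i])"

end

theory Submission
  imports Defs "HOL-Library.Function_Algebras"
begin

text \<open>
  Freeze all arguments of \<open>\<psi>\<close> except the i-th, ranging over G = G^\<oplus>, and the (r-1+j)-th,
  ranging over D = G_j. What remains is a biadditive \<open>\<beta>: G \<times> D \<rightarrow> F_p\<close>, and the remaining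
  derivatives turn f into a 1-bounded g. For such a slice
  E_{d,a,x} \<partial>_a \<partial>_d g(x) \<omega>^\<beta>(a,d) = E_d |E_x \<partial>_d g(x) \<omega>^\<beta>(x,d)|^2.
  Splitting G into cosets of D bounds this by averages over D alone; expanding the square and
  substituting d = m - s - t turns those into averages over m of bilinear sums
  E_{t,s} A(t) cnj(A(s)) \<omega>^\<sigma>(t,s), where
  \<sigma>(t,s) = \<beta>(t,s) - \<beta>(s,t). By Cauchy-Schwarz and orthogonality of characters each such sum is
  at most the square root of the density of the radical of \<sigma>, and that density is bias \<sigma>, the
  bias of the corresponding slice of \<psi>'_ij. So every slice contributes a real t \<ge> 0 with
  t^2 \<le> bias \<sigma>; averaging over the frozen arguments, Cauchy-Schwarz gives \<xi>^2 \<le> bias \<psi>'_ij,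
  and \<xi>^8 \<le> \<xi>^2 because a bias is at most 1.
\<close>

lemma omega_pow_add: "omega_pow (a + b :: 'p::prime_card mod_ring) = omega_pow a * omega_pow b"
proof -
  let ?p = "int CARD('p)"
  obtain m where m: "to_int_mod_ring (a + b) = to_int_mod_ring a + to_int_mod_ring b + ?p * m"
    using to_int_mod_ring_add[of a b] by (metis mod_eqE mod_mod_trivial mult.commute)
  have "2 * of_real pi * \<i> * of_int (to_int_mod_ring a + to_int_mod_ring b + ?p * m) / of_nat CARD('p)
     = 2 * of_real pi * \<i> * of_int (to_int_mod_ring a) / of_nat CARD('p)
       + 2 * of_real pi * \<i> * of_int (to_int_mod_ring b) / of_nat CARD('p)
       + \<i> * (of_int m * (of_real pi * 2))"
    by (simp add: field_simps)
  then show ?thesis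
    unfolding omega_pow_def m by (simp add: exp_add)
qed

lemma omega_pow_zero [simp]: "omega_pow (0 :: 'p::prime_card mod_ring) = 1"
  by (simp add: omega_pow_def)

lemma norm_omega_pow [simp]: "cmod (omega_pow (a :: 'p::prime_card mod_ring)) = 1"
  by (simp add: omega_pow_def norm_exp_eq_Re)

lemma cnj_omega_pow: "cnj (omega_pow (a :: 'p::prime_card mod_ring)) = omega_pow (- a)"
proof -
  have "omega_pow a * omega_pow (- a) = 1"
    by (simp flip: omega_pow_add)
  moreover have "omega_pow a * cnj (omega_pow a) = 1"
    using complex_norm_square[of "omega_pow a"] by simp
  ultimately show ?thesis
    by (metis mult.left_commute mult.right_neutral)
qed

lemma omega_pow_diff: "omega_pow (a - b :: 'p::prime_card mod_ring) = omega_pow a * cnj (omega_pow b)"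
  by (simp add: cnj_omega_pow flip: omega_pow_add)

lemma omega_pow_eq_1_iff: "omega_pow (c :: 'p::prime_card mod_ring) = 1 \<longleftrightarrow> c = 0"
proof
  assume "omega_pow c = 1"
  let ?c = "to_int_mod_ring c"
  have "?c \<in> {0..<int CARD('p)}"
    using range_to_int_mod_ring by blast
  then have c_range: "0 \<le> ?c" "?c < int CARD('p)"
    by auto
  obtain m :: int where "2 * pi * ?c / CARD('p) = 2 * m * pi"
    using \<open>omega_pow c = 1\<close> unfolding omega_pow_def exp_eq_1 by auto
  then have "real_of_int ?c = real_of_int m * real CARD('p)"
    using pi_gt_zero by (simp add: field_simps)
  then have c_eq: "?c = m * CARD('p)"
    by (metis of_int_eq_iff of_int_mult of_int_of_nat_eq)
  have "m = 0"
  proof (rule ccontr)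
    assume "m \<noteq> 0"
    with c_eq c_range have "0 < m"
      by (simp add: zero_le_mult_iff)
    with c_eq have "int CARD('p) \<le> ?c"
      by simp
    with c_range show False
      by simp
  qed
  with c_eq have "?c = 0"
    by simp
  then show "c = 0"
    by (metis to_int_mod_ring_hom.eq_iff to_int_mod_ring_hom.hom_zero)
qed simp


definition ravg :: "'a set \<Rightarrow> ('a \<Rightarrow> real) \<Rightarrow> real" where
  "ravg A h = (\<Sum>a\<in>A. h a) / real (card A)"

lemma avg_cong: "(\<And>a. a \<in> A \<Longrightarrow> F a = H a) \<Longrightarrow> avg A F = avg A H"
  by (simp add: avg_def)

lemma ravg_cong: "(\<And>a. a \<in> A \<Longrightarrow> F a = H a) \<Longrightarrow> ravg A F = ravg A H"
  by (simp add: ravg_def)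

lemma avg_swap: "avg A (\<lambda>a. avg B (\<lambda>b. F a b)) = avg B (\<lambda>b. avg A (\<lambda>a. F a b))"
  unfolding avg_def
  by (simp add: sum_divide_distrib[symmetric] sum.swap[of _ A B] divide_divide_eq_left mult.commute)

lemma ravg_swap: "ravg A (\<lambda>a. ravg B (\<lambda>b. F a b)) = ravg B (\<lambda>b. ravg A (\<lambda>a. F a b))"
  unfolding ravg_def
  by (simp add: sum_divide_distrib[symmetric] sum.swap[of _ A B] divide_divide_eq_left mult.commute)

lemma avg_Times:
  "finite A \<Longrightarrow> finite B \<Longrightarrow> avg (A \<times> B) (\<lambda>(a, b). F a b) = avg A (\<lambda>a. avg B (\<lambda>b. F a b))"
  unfolding avg_def
  by (simp add: sum.cartesian_product[symmetric] card_cartesian_product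
      sum_divide_distrib[symmetric] divide_divide_eq_left mult.commute)

lemma avg_const: "finite A \<Longrightarrow> A \<noteq> {} \<Longrightarrow> avg A (\<lambda>_. c) = c"
  by (simp add: avg_def)

lemma ravg_const: "finite A \<Longrightarrow> A \<noteq> {} \<Longrightarrow> ravg A (\<lambda>_. c) = c"
  by (simp add: ravg_def)

lemma avg_mult_left: "avg A (\<lambda>a. c * F a) = c * avg A F"
  by (simp add: avg_def sum_distrib_left)

lemma avg_mult_right: "avg A (\<lambda>a. F a * c) = avg A F * c"
  by (simp add: avg_def sum_distrib_right)

lemma avg_times_avg: "avg A F * avg B H = avg A (\<lambda>a. avg B (\<lambda>b. F a * H b))"
  by (simp add: avg_mult_left avg_mult_right)

lemma cnj_avg: "cnj (avg A F) = avg A (\<lambda>a. cnj (F a))"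
  by (simp add: avg_def)

lemma avg_of_real: "avg A (\<lambda>a. of_real (h a)) = of_real (ravg A h)"
  by (simp add: avg_def ravg_def)

lemma avg_norm_square: "avg A (\<lambda>a. F a * cnj (F a)) = of_real (ravg A (\<lambda>a. (cmod (F a))\<^sup>2))"
  by (simp only: avg_of_real[symmetric] complex_norm_square)

lemma Re_avg: "Re (avg A F) = ravg A (\<lambda>a. Re (F a))"
  by (simp add: avg_def ravg_def Re_divide_of_nat)

lemma avg_bij_betw: "bij_betw h A B \<Longrightarrow> avg A (\<lambda>a. F (h a)) = avg B F"
  by (simp add: avg_def bij_betw_same_card sum.reindex_bij_betw)

lemma ravg_mono: "(\<And>a. a \<in> A \<Longrightarrow> F a \<le> H a) \<Longrightarrow> ravg A F \<le> ravg A H"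
  by (simp add: ravg_def sum_mono divide_right_mono)

lemma ravg_nonneg: "(\<And>a. a \<in> A \<Longrightarrow> 0 \<le> F a) \<Longrightarrow> 0 \<le> ravg A F"
  by (simp add: ravg_def sum_nonneg)

lemma norm_avg_le: "cmod (avg A F) \<le> ravg A (\<lambda>a. cmod (F a))"
  by (simp add: avg_def ravg_def norm_divide divide_right_mono norm_sum)

lemma Re_avg_le_ravg_norm: "Re (avg A F) \<le> ravg A (\<lambda>a. cmod (F a))"
  using complex_Re_le_cmod norm_avg_le by (rule order_trans)

lemma norm_avg_le_1: "(\<And>a. a \<in> A \<Longrightarrow> cmod (F a) \<le> 1) \<Longrightarrow> cmod (avg A F) \<le> 1"
  using norm_avg_le[of A F] ravg_mono[of A "\<lambda>a. cmod (F a)" "\<lambda>_. 1"]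
  by (cases "finite A \<and> A \<noteq> {}") (auto simp: ravg_const avg_def)

lemma power2_ravg_le: "(ravg A F)\<^sup>2 \<le> ravg A (\<lambda>a. (F a)\<^sup>2)"
proof (cases "finite A \<and> A \<noteq> {}")
  case True
  have "(\<Sum>a\<in>A. F a * 1)\<^sup>2 \<le> (\<Sum>a\<in>A. (F a)\<^sup>2) * (\<Sum>a\<in>A. 1\<^sup>2)"
    by (rule Cauchy_Schwarz_ineq_sum)
  then have "(sum F A)\<^sup>2 \<le> (\<Sum>a\<in>A. (F a)\<^sup>2) * real (card A)"
    by simp
  moreover have "real (card A) > 0"
    using True by auto
  ultimately show ?thesis
    by (simp add: ravg_def power_divide field_simps power2_eq_square)
qed (auto simp: ravg_def)

lemma power2_norm_avg_le: "(cmod (avg A F))\<^sup>2 \<le> ravg A (\<lambda>a. (cmod (F a))\<^sup>2)"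
  using power_mono[OF norm_avg_le norm_ge_zero, of A F 2] power2_ravg_le[of A "\<lambda>a. cmod (F a)"]
  by linarith

definition mult_deriv :: "'a::plus \<Rightarrow> ('a \<Rightarrow> complex) \<Rightarrow> 'a \<Rightarrow> complex" where
  "mult_deriv u h x = h (x + u) * cnj (h x)"

locale finite_add_subgroup =
  fixes S :: "'a::ab_group_add set"
  assumes finite: "finite S"
    and zero_mem: "0 \<in> S"
    and diff_mem: "x \<in> S \<Longrightarrow> y \<in> S \<Longrightarrow> x - y \<in> S"
begin

lemma uminus_mem: "x \<in> S \<Longrightarrow> - x \<in> S"
  using diff_mem[OF zero_mem] by fastforce

lemma add_mem: "x \<in> S \<Longrightarrow> y \<in> S \<Longrightarrow> x + y \<in> S"
  using diff_mem[OF _ uminus_mem] by fastforce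

lemma nonempty: "S \<noteq> {}"
  using zero_mem by blast

lemma bij_betw_add_right: "c \<in> S \<Longrightarrow> bij_betw (\<lambda>x. x + c) S S"
  by (rule bij_betwI[where g = "\<lambda>x. x - c"]) (auto intro: add_mem diff_mem)

lemma avg_add_right: "c \<in> S \<Longrightarrow> avg S (\<lambda>x. F (x + c)) = avg S F"
  by (rule avg_bij_betw[OF bij_betw_add_right])

lemma ravg_minus_right: "c \<in> S \<Longrightarrow> ravg S (\<lambda>x. F (c - x)) = ravg S F"
proof -
  have "bij_betw (\<lambda>x. c - x) S S" if "c \<in> S"
    by (rule bij_betwI[where g = "\<lambda>x. c - x"]) (use that in \<open>auto intro: diff_mem\<close>)
  then show "c \<in> S \<Longrightarrow> ?thesis"
    unfolding ravg_def using sum.reindex_bij_betw[of "\<lambda>x. c - x" S S F] by simp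
qed

lemma avg_omega_pow_additive:
  fixes \<phi> :: "'a \<Rightarrow> 'p::prime_card mod_ring"
  assumes add: "\<And>x y. x \<in> S \<Longrightarrow> y \<in> S \<Longrightarrow> \<phi> (x + y) = \<phi> x + \<phi> y"
  shows "avg S (\<lambda>t. omega_pow (\<phi> t)) = of_bool (\<forall>t\<in>S. \<phi> t = 0)"
proof (cases "\<forall>t\<in>S. \<phi> t = 0")
  case True
  then show ?thesis
    by (simp add: avg_cong[of S _ "\<lambda>_. 1"] avg_const finite nonempty)
next
  case False
  then obtain t\<^sub>0 where t\<^sub>0: "t\<^sub>0 \<in> S" "\<phi> t\<^sub>0 \<noteq> 0"
    by blast
  let ?A = "avg S (\<lambda>t. omega_pow (\<phi> t))"
  have "?A = avg S (\<lambda>t. omega_pow (\<phi> (t + t\<^sub>0)))"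
    by (rule avg_add_right[OF t\<^sub>0(1), symmetric])
  also have "\<dots> = avg S (\<lambda>t. omega_pow (\<phi> t\<^sub>0) * omega_pow (\<phi> t))"
    by (rule avg_cong) (simp add: add t\<^sub>0 omega_pow_add mult.commute)
  also have "\<dots> = omega_pow (\<phi> t\<^sub>0) * ?A"
    by (rule avg_mult_left)
  finally have "(1 - omega_pow (\<phi> t\<^sub>0)) * ?A = 0"
    by (simp add: algebra_simps)
  with t\<^sub>0 False show ?thesis
    by (simp add: omega_pow_eq_1_iff)
qed

lemma avg_avg_mult_deriv: "avg S (\<lambda>a. avg S (mult_deriv a \<Phi>)) = of_real ((cmod (avg S \<Phi>))\<^sup>2)"
proof -
  have "of_real ((cmod (avg S \<Phi>))\<^sup>2) = avg S (\<lambda>y. avg S (\<lambda>x. \<Phi> y * cnj (\<Phi> x)))"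
    by (simp only: complex_norm_square cnj_avg avg_times_avg)
  also have "\<dots> = avg S (\<lambda>x. avg S (\<lambda>a. \<Phi> (a + x) * cnj (\<Phi> x)))"
    by (subst avg_swap) (intro avg_cong avg_add_right[symmetric])
  also have "\<dots> = avg S (\<lambda>a. avg S (mult_deriv a \<Phi>))"
    by (subst avg_swap) (simp add: add.commute mult_deriv_def)
  finally show ?thesis ..
qed

lemma avg_eq_avg_cosets:
  assumes "finite_add_subgroup D" "D \<subseteq> S"
  shows "avg S \<Phi> = avg S (\<lambda>h. avg D (\<lambda>s. \<Phi> (h + s)))"
proof -
  interpret D: finite_add_subgroup D
    by (fact assms(1))
  have "avg S \<Phi> = avg D (\<lambda>s. avg S \<Phi>)"
    by (simp add: avg_const D.finite D.nonempty)
  also have "\<dots> = avg D (\<lambda>s. avg S (\<lambda>h. \<Phi> (h + s)))"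
    using assms(2) by (intro avg_cong avg_add_right[symmetric, of _ \<Phi>]) (rule subsetD)
  also have "\<dots> = avg S (\<lambda>h. avg D (\<lambda>s. \<Phi> (h + s)))"
    by (rule avg_swap)
  finally show ?thesis .
qed

end

section \<open>Biadditive forms on a finite group\<close>

definition radical_density :: "'a set \<Rightarrow> ('a \<Rightarrow> 'a \<Rightarrow> 'p::prime_card mod_ring) \<Rightarrow> real" where
  "radical_density D \<beta> = ravg D (\<lambda>w. of_bool (\<forall>t\<in>D. \<beta> t w = 0))"

lemma radical_density_nonneg: "0 \<le> radical_density D \<beta>"
  by (simp add: radical_density_def ravg_nonneg)

locale biadditive_form = finite_add_subgroup D for D :: "'a::ab_group_add set" +
  fixes \<beta> :: "'a \<Rightarrow> 'a \<Rightarrow> 'p::prime_card mod_ring"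
  assumes add_left: "x \<in> D \<Longrightarrow> y \<in> D \<Longrightarrow> w \<in> D \<Longrightarrow> \<beta> (x + y) w = \<beta> x w + \<beta> y w"
    and add_right: "x \<in> D \<Longrightarrow> w \<in> D \<Longrightarrow> w' \<in> D \<Longrightarrow> \<beta> x (w + w') = \<beta> x w + \<beta> x w'"
begin

lemma diff_right: "x \<in> D \<Longrightarrow> w \<in> D \<Longrightarrow> w' \<in> D \<Longrightarrow> \<beta> x (w - w') = \<beta> x w - \<beta> x w'"
  using add_right[of x "w - w'" w'] diff_mem by (simp add: eq_diff_eq)

lemma biadditive_form_skew: "biadditive_form D (\<lambda>t w. \<beta> t w - \<beta> w t)"
  by unfold_locales (simp_all add: add_left add_right)

lemma avg_omega_pow_left: "w \<in> D \<Longrightarrow> avg D (\<lambda>t. omega_pow (\<beta> t w)) = of_bool (\<forall>t\<in>D. \<beta> t w = 0)"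
  by (rule avg_omega_pow_additive) (simp add: add_left)

lemma avg_avg_omega_pow: "avg D (\<lambda>w. avg D (\<lambda>t. omega_pow (\<beta> t w))) = of_real (radical_density D \<beta>)"
proof -
  have "avg D (\<lambda>w. avg D (\<lambda>t. omega_pow (\<beta> t w))) = avg D (\<lambda>w. of_real (of_bool (\<forall>t\<in>D. \<beta> t w = 0)))"
    by (rule avg_cong) (simp add: avg_omega_pow_left)
  then show ?thesis
    by (simp add: avg_of_real radical_density_def)
qed

lemma ravg_power2_norm_avg_omega_pow_eq:
  "of_real (ravg D (\<lambda>t. (cmod (avg D (\<lambda>s. b s * omega_pow (\<beta> t s))))\<^sup>2))
    = avg D (\<lambda>s. avg D (\<lambda>s'. b s * cnj (b s') * of_real (of_bool (\<forall>t\<in>D. \<beta> t (s - s') = 0))))"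
proof -
  have "of_real (ravg D (\<lambda>t. (cmod (avg D (\<lambda>s. b s * omega_pow (\<beta> t s))))\<^sup>2))
      = avg D (\<lambda>t. avg D (\<lambda>s. avg D (\<lambda>s'. b s * cnj (b s') * (omega_pow (\<beta> t s) * cnj (omega_pow (\<beta> t s'))))))"
    by (simp only: avg_norm_square[symmetric] cnj_avg avg_times_avg complex_cnj_mult mult_ac)
  also have "\<dots> = avg D (\<lambda>s. avg D (\<lambda>s'. avg D (\<lambda>t. b s * cnj (b s') * (omega_pow (\<beta> t s) * cnj (omega_pow (\<beta> t s'))))))"
    by (subst avg_swap, rule avg_cong, rule avg_swap)
  also have "\<dots> = avg D (\<lambda>s. avg D (\<lambda>s'. b s * cnj (b s') * of_real (of_bool (\<forall>t\<in>D. \<beta> t (s - s') = 0))))"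
  proof (intro avg_cong)
    fix s s' assume s: "s \<in> D" and s': "s' \<in> D"
    have "avg D (\<lambda>t. b s * cnj (b s') * (omega_pow (\<beta> t s) * cnj (omega_pow (\<beta> t s'))))
        = b s * cnj (b s') * avg D (\<lambda>t. omega_pow (\<beta> t (s - s')))"
      unfolding avg_mult_left[symmetric] by (rule avg_cong) (simp add: s s' diff_right omega_pow_diff)
    then show "avg D (\<lambda>t. b s * cnj (b s') * (omega_pow (\<beta> t s) * cnj (omega_pow (\<beta> t s'))))
        = b s * cnj (b s') * of_real (of_bool (\<forall>t\<in>D. \<beta> t (s - s') = 0))"
      using avg_omega_pow_left[of "s - s'"] s s' diff_mem by simp
  qed
  finally show ?thesis .
qed

lemma ravg_power2_norm_avg_omega_pow_le:
  assumes b: "\<And>s. s \<in> D \<Longrightarrow> cmod (b s) \<le> 1"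
  shows "ravg D (\<lambda>t. (cmod (avg D (\<lambda>s. b s * omega_pow (\<beta> t s))))\<^sup>2) \<le> radical_density D \<beta>"
proof -
  define I :: "'a \<Rightarrow> real" where "I w = of_bool (\<forall>t\<in>D. \<beta> t w = 0)" for w
  have "ravg D (\<lambda>t. (cmod (avg D (\<lambda>s. b s * omega_pow (\<beta> t s))))\<^sup>2)
      = Re (avg D (\<lambda>s. avg D (\<lambda>s'. b s * cnj (b s') * of_real (I (s - s')))))"
    unfolding I_def ravg_power2_norm_avg_omega_pow_eq[symmetric] by simp
  also have "\<dots> \<le> ravg D (\<lambda>s. cmod (avg D (\<lambda>s'. b s * cnj (b s') * of_real (I (s - s')))))"
    by (rule Re_avg_le_ravg_norm)
  also have "\<dots> \<le> ravg D (\<lambda>s. ravg D (\<lambda>s'. cmod (b s * cnj (b s') * of_real (I (s - s')))))"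
    by (intro ravg_mono norm_avg_le)
  also have "\<dots> \<le> ravg D (\<lambda>s. ravg D (\<lambda>s'. I (s - s')))"
    using b by (intro ravg_mono) (simp add: I_def norm_mult mult_le_one)
  also have "\<dots> = ravg D (\<lambda>s. radical_density D \<beta>)"
    unfolding radical_density_def I_def by (intro ravg_cong ravg_minus_right)
  also have "\<dots> = radical_density D \<beta>"
    by (simp add: ravg_const finite nonempty)
  finally show ?thesis .
qed

lemma norm_avg_avg_omega_pow_le:
  assumes a: "\<And>t. t \<in> D \<Longrightarrow> cmod (a t) \<le> 1" and b: "\<And>s. s \<in> D \<Longrightarrow> cmod (b s) \<le> 1"
  shows "cmod (avg D (\<lambda>t. avg D (\<lambda>s. a t * b s * omega_pow (\<beta> t s)))) \<le> sqrt (radical_density D \<beta>)"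
proof (rule real_le_rsqrt)
  define B where "B t = avg D (\<lambda>s. b s * omega_pow (\<beta> t s))" for t
  have "avg D (\<lambda>t. avg D (\<lambda>s. a t * b s * omega_pow (\<beta> t s))) = avg D (\<lambda>t. a t * B t)"
    by (simp add: B_def avg_mult_left[symmetric] mult.assoc)
  then have "(cmod (avg D (\<lambda>t. avg D (\<lambda>s. a t * b s * omega_pow (\<beta> t s)))))\<^sup>2
      \<le> ravg D (\<lambda>t. (cmod (a t * B t))\<^sup>2)"
    by (simp only: power2_norm_avg_le)
  also have "\<dots> \<le> ravg D (\<lambda>t. (cmod (B t))\<^sup>2)"
    using a by (intro ravg_mono) (simp add: norm_mult power_mono mult_left_le_one_le)
  also have "\<dots> \<le> radical_density D \<beta>"
    unfolding B_def using b by (rule ravg_power2_norm_avg_omega_pow_le)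
  finally show "(cmod (avg D (\<lambda>t. avg D (\<lambda>s. a t * b s * omega_pow (\<beta> t s)))))\<^sup>2 \<le> radical_density D \<beta>" .
qed

lemma twisted_mult_deriv_product_reparam:
  assumes s: "s \<in> D" and t: "t \<in> D" and m: "m \<in> D"
  defines "d \<equiv> m - (s + t)"
  shows "mult_deriv d g s * omega_pow (\<beta> s d) * cnj (mult_deriv d g t * omega_pow (\<beta> t d))
    = (g (m - t) * g t * omega_pow (\<beta> t t - \<beta> t m)) * cnj (g (m - s) * g s * omega_pow (\<beta> s s - \<beta> s m))
      * omega_pow (\<beta> t s - \<beta> s t)"
proof -
  have "\<beta> s d - \<beta> t d = (\<beta> t t - \<beta> t m) - (\<beta> s s - \<beta> s m) + (\<beta> t s - \<beta> s t)"
    using s t m unfolding d_def by (simp add: diff_right add_right add_mem)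
  then have phase: "omega_pow (\<beta> s d) * cnj (omega_pow (\<beta> t d))
      = omega_pow (\<beta> t t - \<beta> t m) * cnj (omega_pow (\<beta> s s - \<beta> s m)) * omega_pow (\<beta> t s - \<beta> s t)"
    by (simp only: omega_pow_diff[symmetric] omega_pow_add[symmetric])
  have "s + d = m - t" "t + d = m - s"
    unfolding d_def by (simp_all add: algebra_simps)
  then have "mult_deriv d g s * omega_pow (\<beta> s d) * cnj (mult_deriv d g t * omega_pow (\<beta> t d))
      = g (m - t) * g t * cnj (g (m - s)) * cnj (g s) * (omega_pow (\<beta> s d) * cnj (omega_pow (\<beta> t d)))"
    unfolding mult_deriv_def by (simp only: complex_cnj_mult complex_cnj_cnj mult_ac)
  also have "\<dots> = (g (m - t) * g t * omega_pow (\<beta> t t - \<beta> t m)) * cnj (g (m - s) * g s * omega_pow (\<beta> s s - \<beta> s m))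
      * omega_pow (\<beta> t s - \<beta> s t)"
    by (simp only: phase complex_cnj_mult mult_ac)
  finally show ?thesis .
qed

lemma ravg_power2_norm_avg_twisted_eq:
  fixes g :: "'a \<Rightarrow> complex"
  defines "A m t \<equiv> g (m - t) * g t * omega_pow (\<beta> t t - \<beta> t m)"
  shows "of_real (ravg D (\<lambda>d. (cmod (avg D (\<lambda>s. mult_deriv d g s * omega_pow (\<beta> s d))))\<^sup>2))
    = avg D (\<lambda>m. avg D (\<lambda>t. avg D (\<lambda>s. A m t * cnj (A m s) * omega_pow (\<beta> t s - \<beta> s t))))"
proof -
  define Y where "Y d s t = mult_deriv d g s * omega_pow (\<beta> s d) * cnj (mult_deriv d g t * omega_pow (\<beta> t d))"
    for d s t
  define Z where "Z m t s = A m t * cnj (A m s) * omega_pow (\<beta> t s - \<beta> s t)" for m t s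
  have "of_real (ravg D (\<lambda>d. (cmod (avg D (\<lambda>s. mult_deriv d g s * omega_pow (\<beta> s d))))\<^sup>2))
      = avg D (\<lambda>d. avg D (\<lambda>s. avg D (\<lambda>t. Y d s t)))"
    by (simp only: avg_norm_square[symmetric] cnj_avg avg_times_avg Y_def)
  also have "\<dots> = avg D (\<lambda>s. avg D (\<lambda>t. avg D (\<lambda>d. Y d s t)))"
    by (subst avg_swap, rule avg_cong, rule avg_swap)
  also have "\<dots> = avg D (\<lambda>s. avg D (\<lambda>t. avg D (\<lambda>m. Z m t s)))"
  proof (rule avg_cong, rule avg_cong)
    fix s t assume s: "s \<in> D" and t: "t \<in> D"
    have "avg D (\<lambda>d. Y d s t) = avg D (\<lambda>m. Y (m + - (s + t)) s t)"
      using uminus_mem[OF add_mem[OF s t]] by (rule avg_add_right[symmetric])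
    also have "\<dots> = avg D (\<lambda>m. Z m t s)"
    proof (rule avg_cong)
      fix m assume m: "m \<in> D"
      show "Y (m + - (s + t)) s t = Z m t s"
        using twisted_mult_deriv_product_reparam[OF s t m, of g]
        by (simp only: Y_def Z_def A_def diff_conv_add_uminus)
    qed
    finally show "avg D (\<lambda>d. Y d s t) = avg D (\<lambda>m. Z m t s)" .
  qed
  also have "\<dots> = avg D (\<lambda>s. avg D (\<lambda>m. avg D (\<lambda>t. Z m t s)))"
    by (rule avg_cong, rule avg_swap)
  also have "\<dots> = avg D (\<lambda>m. avg D (\<lambda>s. avg D (\<lambda>t. Z m t s)))"
    by (rule avg_swap)
  also have "\<dots> = avg D (\<lambda>m. avg D (\<lambda>t. avg D (\<lambda>s. Z m t s)))"
    by (rule avg_cong, rule avg_swap)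
  finally show ?thesis
    unfolding Z_def .
qed

lemma ravg_power2_norm_avg_twisted_le:
  assumes g: "\<And>s. s \<in> D \<Longrightarrow> cmod (g s) \<le> 1"
  shows "ravg D (\<lambda>d. (cmod (avg D (\<lambda>s. mult_deriv d g s * omega_pow (\<beta> s d))))\<^sup>2)
    \<le> sqrt (radical_density D (\<lambda>t w. \<beta> t w - \<beta> w t))"
proof -
  interpret skew: biadditive_form D "\<lambda>t w. \<beta> t w - \<beta> w t"
    by (rule biadditive_form_skew)
  define A where "A m t = g (m - t) * g t * omega_pow (\<beta> t t - \<beta> t m)" for m t
  define Z where "Z m t s = A m t * cnj (A m s) * omega_pow (\<beta> t s - \<beta> s t)" for m t s
  have "ravg D (\<lambda>d. (cmod (avg D (\<lambda>s. mult_deriv d g s * omega_pow (\<beta> s d))))\<^sup>2)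
      = Re (avg D (\<lambda>m. avg D (\<lambda>t. avg D (\<lambda>s. Z m t s))))"
    unfolding Z_def A_def ravg_power2_norm_avg_twisted_eq[symmetric] by simp
  also have "\<dots> \<le> ravg D (\<lambda>m. cmod (avg D (\<lambda>t. avg D (\<lambda>s. Z m t s))))"
    by (rule Re_avg_le_ravg_norm)
  also have "\<dots> \<le> ravg D (\<lambda>m. sqrt (radical_density D (\<lambda>t w. \<beta> t w - \<beta> w t)))"
  proof (rule ravg_mono)
    fix m assume m: "m \<in> D"
    have "cmod (A m t) \<le> 1" if "t \<in> D" for t
      using g[OF diff_mem[OF m that]] g[OF that] by (simp add: A_def norm_mult mult_le_one)
    then show "cmod (avg D (\<lambda>t. avg D (\<lambda>s. Z m t s))) \<le> sqrt (radical_density D (\<lambda>t w. \<beta> t w - \<beta> w t))"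
      unfolding Z_def by (intro skew.norm_avg_avg_omega_pow_le) simp_all
  qed
  also have "\<dots> = sqrt (radical_density D (\<lambda>t w. \<beta> t w - \<beta> w t))"
    by (simp add: ravg_const finite nonempty)
  finally show ?thesis .
qed

end

section \<open>The estimate for a single slice\<close>

locale biadditive_pairing = G: finite_add_subgroup G + D: finite_add_subgroup D
  for G D :: "'a::ab_group_add set" +
  fixes \<beta> :: "'a \<Rightarrow> 'a \<Rightarrow> 'p::prime_card mod_ring"
  assumes subset: "D \<subseteq> G"
    and add_left: "x \<in> G \<Longrightarrow> y \<in> G \<Longrightarrow> d \<in> D \<Longrightarrow> \<beta> (x + y) d = \<beta> x d + \<beta> y d"
    and add_right: "x \<in> G \<Longrightarrow> d \<in> D \<Longrightarrow> e \<in> D \<Longrightarrow> \<beta> x (d + e) = \<beta> x d + \<beta> x e"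

sublocale biadditive_pairing \<subseteq> restricted: biadditive_form D \<beta>
  using subset by unfold_locales (auto intro: add_left add_right)

context biadditive_pairing
begin

lemma avg_avg_mult_deriv_twisted_eq:
  assumes d: "d \<in> D"
  shows "avg G (\<lambda>a. avg G (\<lambda>x. mult_deriv a (mult_deriv d g) x * omega_pow (\<beta> a d)))
    = of_real ((cmod (avg G (\<lambda>x. mult_deriv d g x * omega_pow (\<beta> x d))))\<^sup>2)"
proof -
  define \<Phi> where "\<Phi> x = mult_deriv d g x * omega_pow (\<beta> x d)" for x
  have pointwise: "mult_deriv a (mult_deriv d g) x * omega_pow (\<beta> a d) = mult_deriv a \<Phi> x"
    if "a \<in> G" "x \<in> G" for a x
  proof -
    have "omega_pow (\<beta> a d) = omega_pow (\<beta> (x + a) d) * cnj (omega_pow (\<beta> x d))"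
      using that subset d by (simp add: add_left subset_iff omega_pow_diff[symmetric])
    then show ?thesis
      unfolding \<Phi>_def mult_deriv_def by (simp only: complex_cnj_mult add.assoc mult_ac)
  qed
  have "avg G (\<lambda>a. avg G (\<lambda>x. mult_deriv a (mult_deriv d g) x * omega_pow (\<beta> a d)))
      = avg G (\<lambda>a. avg G (mult_deriv a \<Phi>))"
    by (intro avg_cong pointwise)
  also have "\<dots> = of_real ((cmod (avg G \<Phi>))\<^sup>2)"
    by (rule G.avg_avg_mult_deriv)
  finally show ?thesis
    unfolding \<Phi>_def .
qed

lemma power2_norm_avg_twisted_le_cosets:
  assumes d: "d \<in> D"
  shows "(cmod (avg G (\<lambda>x. mult_deriv d g x * omega_pow (\<beta> x d))))\<^sup>2
    \<le> ravg G (\<lambda>h. (cmod (avg D (\<lambda>s. mult_deriv d (\<lambda>y. g (h + y)) s * omega_pow (\<beta> s d))))\<^sup>2)"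
proof -
  define X where "X h = avg D (\<lambda>s. mult_deriv d (\<lambda>y. g (h + y)) s * omega_pow (\<beta> s d))" for h
  have "avg G (\<lambda>x. mult_deriv d g x * omega_pow (\<beta> x d))
      = avg G (\<lambda>h. avg D (\<lambda>s. mult_deriv d g (h + s) * omega_pow (\<beta> (h + s) d)))"
    by (rule G.avg_eq_avg_cosets[OF D.finite_add_subgroup_axioms subset])
  also have "\<dots> = avg G (\<lambda>h. omega_pow (\<beta> h d) * X h)"
  proof (rule avg_cong)
    fix h assume h: "h \<in> G"
    show "avg D (\<lambda>s. mult_deriv d g (h + s) * omega_pow (\<beta> (h + s) d)) = omega_pow (\<beta> h d) * X h"
      unfolding X_def avg_mult_left[symmetric]
    proof (rule avg_cong)
      fix s assume "s \<in> D"
      with h d subset have "omega_pow (\<beta> (h + s) d) = omega_pow (\<beta> h d) * omega_pow (\<beta> s d)"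
        by (auto simp: add_left omega_pow_add)
      then show "mult_deriv d g (h + s) * omega_pow (\<beta> (h + s) d)
          = omega_pow (\<beta> h d) * (mult_deriv d (\<lambda>y. g (h + y)) s * omega_pow (\<beta> s d))"
        unfolding mult_deriv_def by (simp only: add.assoc mult_ac)
    qed
  qed
  finally have "(cmod (avg G (\<lambda>x. mult_deriv d g x * omega_pow (\<beta> x d))))\<^sup>2
      \<le> ravg G (\<lambda>h. (cmod (omega_pow (\<beta> h d) * X h))\<^sup>2)"
    by (simp only: power2_norm_avg_le)
  then show ?thesis
    by (simp add: norm_mult X_def)
qed

theorem avg_mult_deriv2_twisted_le:
  assumes g: "\<And>x. x \<in> G \<Longrightarrow> cmod (g x) \<le> 1"
  shows "\<exists>t\<ge>0. avg D (\<lambda>d. avg G (\<lambda>a. avg G (\<lambda>x. mult_deriv a (mult_deriv d g) x * omega_pow (\<beta> a d))))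
      = of_real t \<and> t \<le> sqrt (radical_density D (\<lambda>u w. \<beta> u w - \<beta> w u))"
proof (intro exI conjI)
  let ?t = "ravg D (\<lambda>d. (cmod (avg G (\<lambda>x. mult_deriv d g x * omega_pow (\<beta> x d))))\<^sup>2)"
  show "avg D (\<lambda>d. avg G (\<lambda>a. avg G (\<lambda>x. mult_deriv a (mult_deriv d g) x * omega_pow (\<beta> a d))))
      = of_real ?t"
    by (simp only: avg_cong[OF avg_avg_mult_deriv_twisted_eq] avg_of_real)
  show "0 \<le> ?t"
    by (simp add: ravg_nonneg)
  have "?t \<le> ravg D (\<lambda>d. ravg G (\<lambda>h.
      (cmod (avg D (\<lambda>s. mult_deriv d (\<lambda>y. g (h + y)) s * omega_pow (\<beta> s d))))\<^sup>2))"
    by (intro ravg_mono power2_norm_avg_twisted_le_cosets)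
  also have "\<dots> = ravg G (\<lambda>h. ravg D (\<lambda>d.
      (cmod (avg D (\<lambda>s. mult_deriv d (\<lambda>y. g (h + y)) s * omega_pow (\<beta> s d))))\<^sup>2))"
    by (rule ravg_swap)
  also have "\<dots> \<le> ravg G (\<lambda>h. sqrt (radical_density D (\<lambda>u w. \<beta> u w - \<beta> w u)))"
    using g subset by (intro ravg_mono restricted.ravg_power2_norm_avg_twisted_le) (auto intro: G.add_mem)
  also have "\<dots> = sqrt (radical_density D (\<lambda>u w. \<beta> u w - \<beta> w u))"
    by (simp add: ravg_const G.finite G.nonempty)
  finally show "?t \<le> sqrt (radical_density D (\<lambda>u w. \<beta> u w - \<beta> w u))" .
qed

end

lemma set_Cons_eq_image: "set_Cons A X = (\<lambda>(a, xs). a # xs) ` (A \<times> X)"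
  by (auto simp: set_Cons_def)

lemma mem_listset_iff: "xs \<in> listset As \<longleftrightarrow> list_all2 (\<in>) xs As"
  by (induction As arbitrary: xs) (auto simp: set_Cons_def list_all2_Cons2)

lemma finite_listset: "(\<And>A. A \<in> set As \<Longrightarrow> finite A) \<Longrightarrow> finite (listset As)"
  by (induction As) (auto simp: set_Cons_eq_image)

lemma list_update_mem_listset:
  assumes "length Ws' = length Ws" "\<And>l. l \<noteq> m \<Longrightarrow> Ws' ! l = Ws ! l"
    and "zs \<in> listset Ws'" "a \<in> Ws ! m"
  shows "zs[m := a] \<in> listset Ws"
  unfolding mem_listset_iff list_all2_conv_all_nth
proof (intro conjI allI impI)
  show "length (zs[m := a]) = length Ws"
    using assms(1,3) by (simp add: mem_listset_iff list_all2_conv_all_nth)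
  fix l assume "l < length (zs[m := a])"
  then show "zs[m := a] ! l \<in> Ws ! l"
    using assms by (cases "l = m") (auto simp: mem_listset_iff list_all2_conv_all_nth)
qed

lemma bij_betw_list_update_nth:
  assumes "length Ws' = length Ws" "m < length Ws" "\<And>l. l \<noteq> m \<Longrightarrow> Ws' ! l = Ws ! l"
  shows "bij_betw (\<lambda>(zs, a). (zs[m := a], zs ! m)) (listset Ws' \<times> Ws ! m) (listset Ws \<times> Ws' ! m)"
proof (rule bij_betwI[where g = "\<lambda>(ys, b). (ys[m := b], ys ! m)"])
  have length: "length zs = length Ws" if "zs \<in> listset Ws \<or> zs \<in> listset Ws'" for zs
    using that assms(1) by (auto simp: mem_listset_iff list_all2_conv_all_nth)
  have nth: "zs ! m \<in> Ws ! m" if "zs \<in> listset Ws" for zs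
    using that assms(2) by (simp add: mem_listset_iff list_all2_conv_all_nth)
  have nth': "zs ! m \<in> Ws' ! m" if "zs \<in> listset Ws'" for zs
    using that assms(1,2) by (simp add: mem_listset_iff list_all2_conv_all_nth)
  show "(\<lambda>(zs, a). (zs[m := a], zs ! m)) \<in> listset Ws' \<times> Ws ! m \<rightarrow> listset Ws \<times> Ws' ! m"
    using assms list_update_mem_listset[of Ws' Ws m] nth' by auto
  show "(\<lambda>(ys, b). (ys[m := b], ys ! m)) \<in> listset Ws \<times> Ws' ! m \<rightarrow> listset Ws' \<times> Ws ! m"
    using assms list_update_mem_listset[of Ws Ws' m] nth by (auto simp: eq_commute)
  show "(case case x of (zs, a) \<Rightarrow> (zs[m := a], zs ! m) of (ys, b) \<Rightarrow> (ys[m := b], ys ! m)) = x"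
    if "x \<in> listset Ws' \<times> Ws ! m" for x
    using that length assms(2) by auto
  show "(case case y of (ys, b) \<Rightarrow> (ys[m := b], ys ! m) of (zs, a) \<Rightarrow> (zs[m := a], zs ! m)) = y"
    if "y \<in> listset Ws \<times> Ws' ! m" for y
    using that length assms(2) by auto
qed

lemma avg_listset_update:
  assumes "length Ws' = length Ws" "m < length Ws" "\<And>l. l \<noteq> m \<Longrightarrow> Ws' ! l = Ws ! l"
    and "\<And>A. A \<in> set Ws \<Longrightarrow> finite A" "\<And>A. A \<in> set Ws' \<Longrightarrow> finite A" "Ws' ! m \<noteq> {}"
  shows "avg (listset Ws) F = avg (listset Ws') (\<lambda>zs. avg (Ws ! m) (\<lambda>a. F (zs[m := a])))"
proof -
  have finite: "finite (listset Ws)" "finite (listset Ws')" "finite (Ws ! m)" "finite (Ws' ! m)"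
    using assms by (auto intro!: finite_listset)
  have "avg (listset Ws) F = avg (listset Ws \<times> Ws' ! m) (\<lambda>(ys, b). F ys)"
    using finite assms(6) by (simp add: avg_Times avg_const)
  also have "\<dots> = avg (listset Ws' \<times> Ws ! m) (\<lambda>(zs, a). F (zs[m := a]))"
    using avg_bij_betw[OF bij_betw_list_update_nth[OF assms(1-3)], of "\<lambda>(ys, b). F ys"]
    by (simp add: case_prod_unfold)
  also have "\<dots> = avg (listset Ws') (\<lambda>zs. avg (Ws ! m) (\<lambda>a. F (zs[m := a])))"
    using finite by (simp add: avg_Times)
  finally show ?thesis .
qed

lemma avg_listset_update2:
  assumes "length Ws' = length Ws" "i < q" "q < length Ws" "\<And>l. l \<noteq> i \<Longrightarrow> Ws' ! l = Ws ! l"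
    and "\<And>A. A \<in> set Ws \<Longrightarrow> finite A \<and> A \<noteq> {}" "\<And>A. A \<in> set Ws' \<Longrightarrow> finite A \<and> A \<noteq> {}"
  shows "avg (listset Ws) F
    = avg (listset Ws') (\<lambda>zs. avg (Ws ! q) (\<lambda>d. avg (Ws ! i) (\<lambda>a. F (zs[q := d, i := a]))))"
proof -
  have "Ws' ! i \<noteq> {}" "Ws' ! q \<noteq> {}"
    using assms(1-3,6) by (metis nth_mem order.strict_trans)+
  moreover have "Ws' ! q = Ws ! q"
    using assms(2,4) by simp
  ultimately show ?thesis
    using assms
    by (subst avg_listset_update[where Ws' = Ws' and m = i], simp_all)
      (subst avg_listset_update[where Ws = Ws' and Ws' = Ws' and m = q], simp_all)
qed

lemma vadd_eq_plus: "vadd x y = x + y"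
  by (auto simp: vadd_def plus_fun_def)

lemma mderiv_eq_mult_deriv: "mderiv = mult_deriv"
  by (simp add: fun_eq_iff mderiv_def mult_deriv_def vadd_eq_plus)

lemma mult_deriv_commute:
  "mult_deriv a (mult_deriv b h) = mult_deriv b (mult_deriv (a :: 'a::ab_semigroup_add) h)"
  by (simp add: fun_eq_iff mult_deriv_def ac_simps)

definition remove_nth :: "nat \<Rightarrow> 'a list \<Rightarrow> 'a list" where
  "remove_nth m xs = take m xs @ drop (Suc m) xs"

lemma set_remove_nth_subset: "set (remove_nth m xs) \<subseteq> set xs"
  by (auto simp: remove_nth_def dest: in_set_takeD in_set_dropD)

lemma mderivs_remove_nth:
  "m < length us \<Longrightarrow> mderivs us f = mult_deriv (us ! m) (mderivs (remove_nth m us) f)"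
proof (induction us arbitrary: m)
  case (Cons u us)
  then show ?case
    by (cases m) (auto simp: remove_nth_def mderiv_eq_mult_deriv mult_deriv_commute)
qed simp

lemma mderivs_list_update2:
  assumes "i < q" "q < length zs"
  shows "mderivs (zs[q := d, i := a]) f
    = mult_deriv a (mult_deriv d (mderivs (remove_nth (q - 1) (remove_nth i zs)) f))"
proof -
  have "remove_nth i (zs[q := d]) = (remove_nth i zs)[q - 1 := d]"
    using assms by (intro nth_equalityI) (auto simp: remove_nth_def nth_append nth_list_update min_def)
  moreover have "q - 1 < length (remove_nth i zs)"
    using assms by (simp add: remove_nth_def)
  ultimately show ?thesis
    using assms mderivs_remove_nth[of i "zs[q := d, i := a]" f]
      mderivs_remove_nth[of "q - 1" "(remove_nth i zs)[q - 1 := d]" f]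
    by (simp add: remove_nth_def)
qed

lemma norm_mderivs_le:
  fixes S :: "'p::prime_card vec set"
  assumes "finite_add_subgroup S" "set us \<subseteq> S" "\<forall>x\<in>S. cmod (f x) \<le> 1" "x \<in> S"
  shows "cmod (mderivs us f x) \<le> 1"
  using assms(2-)
  by (induction us arbitrary: x)
    (auto simp: mderiv_eq_mult_deriv mult_deriv_def norm_mult finite_add_subgroup.add_mem[OF assms(1)]
      intro!: mult_le_one)

lemma multilinear_add:
  assumes "multilinear Vs \<psi>" "xs \<in> listset Vs" "m < length Vs" "u \<in> Vs ! m" "v \<in> Vs ! m"
  shows "\<psi> (xs[m := u + v]) = \<psi> (xs[m := u]) + \<psi> (xs[m := v])"
  using assms unfolding multilinear_def mem_listset_iff vadd_eq_plus by blast

section \<open>Slicing a multilinear form\<close>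

text \<open>
  The swapped form
  \<open>\<psi>'\<close> has carriers \<open>Vs' = Vs[i := D]\<close>; a list \<open>zs \<in> listset Vs'\<close> supplies the frozen arguments,
  its entries at \<open>i\<close> and \<open>q\<close> being irrelevant.
\<close>

locale multilinear_slices = G: finite_add_subgroup G for G :: "'p::prime_card vec set" +
  fixes Vs :: "'p vec set list" and \<psi> :: "'p vec list \<Rightarrow> 'p mod_ring" and i q :: nat
  assumes carriers: "\<And>V. V \<in> set Vs \<Longrightarrow> finite_add_subgroup V \<and> V \<subseteq> G"
    and slot_order: "i < q" "q < length Vs"
    and slot_i: "Vs ! i = G"
    and multilinear: "multilinear Vs \<psi>"
begin

abbreviation D :: "'p vec set" where
  "D \<equiv> Vs ! q"

abbreviation Vs' :: "'p vec set list" where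
  "Vs' \<equiv> Vs[i := D]"

definition slice_form :: "'p vec list \<Rightarrow> 'p vec \<Rightarrow> 'p vec \<Rightarrow> 'p mod_ring" where
  "slice_form zs a d = \<psi> (zs[q := d, i := a])"

lemma finite_add_subgroup_D: "finite_add_subgroup D" and D_subset: "D \<subseteq> G"
  using carriers[OF nth_mem[OF slot_order(2)]] by simp_all

lemma carriers': "V \<in> set Vs' \<Longrightarrow> finite_add_subgroup V \<and> V \<subseteq> G"
  using carriers finite_add_subgroup_D D_subset set_update_subset_insert[of Vs i D] by auto

lemma finite_nonempty_carriers:
  assumes "V \<in> set Vs \<or> V \<in> set Vs'"
  shows "finite V \<and> V \<noteq> {}"
proof -
  have "finite_add_subgroup V"
    using assms carriers carriers' by auto
  then show ?thesis
    by (simp add: finite_add_subgroup.finite finite_add_subgroup.nonempty)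
qed

lemma avg_listset_slices:
  "avg (listset Vs) F = avg (listset Vs') (\<lambda>zs. avg D (\<lambda>d. avg G (\<lambda>a. F (zs[q := d, i := a]))))"
  using slot_order finite_nonempty_carriers
  by (subst avg_listset_update2[where Ws' = Vs']) (auto simp: slot_i)

lemma avg_listset_slices':
  "avg (listset Vs') F = avg (listset Vs') (\<lambda>zs. avg D (\<lambda>d. avg D (\<lambda>u. F (zs[q := d, i := u]))))"
  using slot_order finite_nonempty_carriers
  by (subst avg_listset_update2[where Ws = Vs' and Ws' = Vs']) auto

lemma slice_mem_listset:
  assumes "zs \<in> listset Vs'" "a \<in> G" "d \<in> D"
  shows "zs[q := d, i := a] \<in> listset Vs"
proof -
  have "zs[q := d] \<in> listset Vs'"
    using assms slot_order by (intro list_update_mem_listset) auto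
  then show ?thesis
    using assms slot_order slot_i by (intro list_update_mem_listset[where Ws' = Vs']) auto
qed

lemma biadditive_pairing_slice_form:
  assumes zs: "zs \<in> listset Vs'"
  shows "biadditive_pairing G D (slice_form zs)"
proof (intro biadditive_pairing.intro biadditive_pairing_axioms.intro G.finite_add_subgroup_axioms
    finite_add_subgroup_D D_subset)
  fix x y d assume "x \<in> G" "y \<in> G" "d \<in> D"
  then show "slice_form zs (x + y) d = slice_form zs x d + slice_form zs y d"
    using multilinear_add[OF multilinear slice_mem_listset[OF zs], of x d i x y] slot_order slot_i
    by (simp add: slice_form_def)
next
  fix x d e assume "x \<in> G" "d \<in> D" "e \<in> D"
  then show "slice_form zs x (d + e) = slice_form zs x d + slice_form zs x e"
    using multilinear_add[OF multilinear slice_mem_listset[OF zs], of x d q d e] slot_order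
    by (simp add: slice_form_def list_update_swap)
qed

lemma bias_swap_eq:
  "bias Vs' (\<lambda>ys. \<psi> ys - \<psi> (ys[i := ys ! q, q := ys ! i]))
    = of_real (ravg (listset Vs') (\<lambda>zs. radical_density D (\<lambda>u w. slice_form zs u w - slice_form zs w u)))"
proof -
  let ?\<psi>' = "\<lambda>ys. \<psi> ys - \<psi> (ys[i := ys ! q, q := ys ! i])"
  have "bias Vs' ?\<psi>' = avg (listset Vs') (\<lambda>zs. avg D (\<lambda>d. avg D (\<lambda>u. omega_pow (?\<psi>' (zs[q := d, i := u])))))"
    unfolding bias_def by (rule avg_listset_slices')
  also have "\<dots> = avg (listset Vs') (\<lambda>zs. avg D (\<lambda>d. avg D (\<lambda>u. omega_pow (slice_form zs u d - slice_form zs d u))))"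
  proof (intro avg_cong)
    fix zs d u assume "zs \<in> listset Vs'"
    then have "length zs = length Vs"
      by (simp add: mem_listset_iff list_all2_conv_all_nth)
    moreover have "zs[q := d, i := u, i := d, q := u] = zs[q := u, i := d]"
      using slot_order by (simp add: list_update_swap)
    ultimately show "omega_pow (?\<psi>' (zs[q := d, i := u])) = omega_pow (slice_form zs u d - slice_form zs d u)"
      using slot_order by (simp add: slice_form_def)
  qed
  also have "\<dots> = avg (listset Vs') (\<lambda>zs. of_real (radical_density D (\<lambda>u w. slice_form zs u w - slice_form zs w u)))"
  proof (rule avg_cong)
    fix zs assume "zs \<in> listset Vs'"
    then interpret biadditive_pairing G D "slice_form zs"
      by (rule biadditive_pairing_slice_form)
    interpret skew: biadditive_form D "\<lambda>u w. slice_form zs u w - slice_form zs w u"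
      by (rule restricted.biadditive_form_skew)
    show "avg D (\<lambda>d. avg D (\<lambda>u. omega_pow (slice_form zs u d - slice_form zs d u)))
        = of_real (radical_density D (\<lambda>u w. slice_form zs u w - slice_form zs w u))"
      by (rule skew.avg_avg_omega_pow)
  qed
  finally show ?thesis
    by (simp only: avg_of_real)
qed

lemma set_listset_subset: "zs \<in> listset Vs' \<Longrightarrow> set zs \<subseteq> G"
  using carriers' by (fastforce simp: mem_listset_iff list_all2_conv_all_nth in_set_conv_nth)

lemma avg_mderivs_slice_le:
  assumes zs: "zs \<in> listset Vs'" and f: "\<forall>x\<in>G. cmod (f x) \<le> 1"
  shows "\<exists>t\<ge>0. avg D (\<lambda>d. avg G (\<lambda>a. avg G (\<lambda>x.
      mderivs (zs[q := d, i := a]) f x * omega_pow (\<psi> (zs[q := d, i := a])))))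
    = of_real t \<and> t \<le> sqrt (radical_density D (\<lambda>u w. slice_form zs u w - slice_form zs w u))"
proof -
  interpret biadditive_pairing G D "slice_form zs"
    using zs by (rule biadditive_pairing_slice_form)
  define g where "g = mderivs (remove_nth (q - 1) (remove_nth i zs)) f"
  have "length zs = length Vs"
    using zs by (simp add: mem_listset_iff list_all2_conv_all_nth)
  then have mderivs_eq: "mderivs (zs[q := d, i := a]) f = mult_deriv a (mult_deriv d g)" for d a
    using slot_order by (simp add: g_def mderivs_list_update2)
  have "set (remove_nth (q - 1) (remove_nth i zs)) \<subseteq> G"
    using set_remove_nth_subset[of "q - 1" "remove_nth i zs"] set_remove_nth_subset[of i zs]
      set_listset_subset[OF zs] by blast
  then have "cmod (g x) \<le> 1" if "x \<in> G" for x
    unfolding g_def by (rule norm_mderivs_le[OF G.finite_add_subgroup_axioms _ f that])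
  from avg_mult_deriv2_twisted_le[OF this] show ?thesis
    unfolding mderivs_eq slice_form_def .
qed

theorem bias_swap_ge_power2:
  assumes f: "\<forall>x\<in>G. cmod (f x) \<le> 1"
    and \<xi>: "0 \<le> \<xi>" "\<xi> \<le> Re (avg (listset Vs \<times> G) (\<lambda>(ads, x). mderivs ads f x * omega_pow (\<psi> ads)))"
  obtains b where "bias Vs' (\<lambda>ys. \<psi> ys - \<psi> (ys[i := ys ! q, q := ys ! i])) = of_real b" "\<xi>\<^sup>2 \<le> b"
proof -
  define \<rho> where "\<rho> zs = radical_density D (\<lambda>u w. slice_form zs u w - slice_form zs w u)" for zs
  define T where "T zs = avg D (\<lambda>d. avg G (\<lambda>a. avg G (\<lambda>x.
      mderivs (zs[q := d, i := a]) f x * omega_pow (\<psi> (zs[q := d, i := a])))))" for zs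
  have T: "T zs = of_real (Re (T zs)) \<and> 0 \<le> Re (T zs) \<and> (Re (T zs))\<^sup>2 \<le> \<rho> zs"
    if zs: "zs \<in> listset Vs'" for zs
  proof -
    obtain t where t: "0 \<le> t" "T zs = of_real t" "t \<le> sqrt (\<rho> zs)"
      using avg_mderivs_slice_le[OF zs f] unfolding T_def \<rho>_def by blast
    then have "t\<^sup>2 \<le> (sqrt (\<rho> zs))\<^sup>2"
      by (simp add: power_mono)
    then show ?thesis
      using t by (simp add: \<rho>_def radical_density_nonneg)
  qed
  have "avg (listset Vs \<times> G) (\<lambda>(ads, x). mderivs ads f x * omega_pow (\<psi> ads))
      = avg (listset Vs) (\<lambda>ads. avg G (\<lambda>x. mderivs ads f x * omega_pow (\<psi> ads)))"
    using finite_nonempty_carriers G.finite by (simp add: avg_Times finite_listset)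
  also have "\<dots> = avg (listset Vs') T"
    unfolding T_def by (rule avg_listset_slices)
  finally have "\<xi> \<le> ravg (listset Vs') (\<lambda>zs. Re (T zs))"
    using \<xi>(2) by (simp add: Re_avg)
  then have "\<xi>\<^sup>2 \<le> (ravg (listset Vs') (\<lambda>zs. Re (T zs)))\<^sup>2"
    using \<xi>(1) by (simp add: power_mono)
  also have "\<dots> \<le> ravg (listset Vs') (\<lambda>zs. (Re (T zs))\<^sup>2)"
    by (rule power2_ravg_le)
  also have "\<dots> \<le> ravg (listset Vs') \<rho>"
    using T by (intro ravg_mono) blast
  finally have "\<xi>\<^sup>2 \<le> ravg (listset Vs') (\<lambda>zs. radical_density D (\<lambda>u w. slice_form zs u w - slice_form zs w u))"
    unfolding \<rho>_def .
  then show ?thesis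
    by (rule that[OF bias_swap_eq])
qed

end

section \<open>The direct sum\<close>

lemma finite_Gsum: "finite (Gsum n k :: 'p::prime_card vec set)"
proof -
  let ?S = "SIGMA j:{..<k}. {..<n j}"
  have "inj_on (\<lambda>x. restrict (\<lambda>(j, t). x j t) ?S) (Gsum n k :: 'p vec set)"
  proof (rule inj_onI, intro ext)
    fix x y :: "'p vec" and j t
    assume x: "x \<in> Gsum n k" and y: "y \<in> Gsum n k"
      and eq: "restrict (\<lambda>(j, t). x j t) ?S = restrict (\<lambda>(j, t). y j t) ?S"
    show "x j t = y j t"
    proof (cases "j < k \<and> t < n j")
      case True
      then show ?thesis
        using fun_cong[OF eq, of "(j, t)"] by simp
    next
      case False
      then show ?thesis
        using x y by (auto simp: Gsum_def not_less)
    qed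
  qed
  moreover have "(\<lambda>x. restrict (\<lambda>(j, t). x j t) ?S) ` Gsum n k \<subseteq> ?S \<rightarrow>\<^sub>E (UNIV :: 'p mod_ring set)"
    by (intro image_subsetI) simp
  then have "finite ((\<lambda>x. restrict (\<lambda>(j, t). x j t) ?S) ` (Gsum n k :: 'p vec set))"
    by (rule finite_subset) (intro finite_PiE finite_SigmaI; simp)
  ultimately show ?thesis
    by (rule finite_imageD[rotated])
qed

lemma finite_add_subgroup_Gsum: "finite_add_subgroup (Gsum n k :: 'p::prime_card vec set)"
  using finite_Gsum by unfold_locales (auto simp: Gsum_def)

lemma Gblock_subset_Gsum: "Gblock n k j \<subseteq> Gsum n k"
  by (auto simp: Gblock_def)

lemma finite_add_subgroup_Gblock: "finite_add_subgroup (Gblock n k j :: 'p::prime_card vec set)"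
  by unfold_locales (auto simp: Gblock_def Gsum_def intro: finite_subset[OF _ finite_Gsum])

lemma multilinear_slices_direct_sum:
  assumes "multilinear (replicate (r - 1) (Gsum n k) @ map (Gblock n k) [0..<k]) \<psi>" "i < r - 1" "j < k"
  shows "multilinear_slices (Gsum n k) (replicate (r - 1) (Gsum n k) @ map (Gblock n k) [0..<k]) \<psi> i (r - 1 + j)"
  using assms finite_add_subgroup_Gsum finite_add_subgroup_Gblock Gblock_subset_Gsum[THEN subsetD]
  by (intro multilinear_slices.intro multilinear_slices_axioms.intro) (auto simp: nth_append)

lemma norm_bias_le_1: "cmod (bias Vs \<alpha>) \<le> 1"
  unfolding bias_def by (rule norm_avg_le_1) simp

theorem proposition28:
  fixes n :: "nat \<Rightarrow> nat" and k r :: nat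
    and f :: "('p::prime_card) vec \<Rightarrow> complex"
    and \<xi> :: real
    and \<psi> :: "'p vec list \<Rightarrow> 'p mod_ring"
    and i j :: nat
  assumes "k \<ge> 1" and "r \<ge> 1"
    and "\<forall>x \<in> Gsum n k. cmod (f x) \<le> 1"
    and "\<xi> > 0"
    and "multilinear (replicate (r - 1) (Gsum n k) @ map (Gblock n k) [0..<k]) \<psi>"
    and "let E = avg (listset (replicate (r - 1) (Gsum n k) @ map (Gblock n k) [0..<k]) \<times> Gsum n k)
                   (\<lambda>(ads, x). mderivs ads f x * omega_pow (\<psi> ads))
         in Im E = 0 \<and> Re E \<ge> \<xi>"
    and "i < r - 1" and "j < k"
  shows "let B = bias ((replicate (r - 1) (Gsum n k) @ map (Gblock n k) [0..<k])[i := Gblock n k j])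
                     (psi_prime r i j \<psi>)
         in Im B = 0 \<and> Re B \<ge> \<xi> ^ 8"
proof -
  define Vs :: "'p vec set list" where "Vs = replicate (r - 1) (Gsum n k) @ map (Gblock n k) [0..<k]"
  define q where "q = r - 1 + j"
  interpret multilinear_slices "Gsum n k" Vs \<psi> i q
    unfolding Vs_def q_def using assms(5,7,8) by (rule multilinear_slices_direct_sum)
  have hypothesis: "\<xi> \<le> Re (avg (listset Vs \<times> Gsum n k) (\<lambda>(ads, x). mderivs ads f x * omega_pow (\<psi> ads)))"
    using assms(6) unfolding Let_def Vs_def by (rule conjunct2)
  obtain b where "bias (Vs[i := Vs ! q]) (\<lambda>ys. \<psi> ys - \<psi> (ys[i := ys ! q, q := ys ! i])) = of_real b"
    and "\<xi>\<^sup>2 \<le> b"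
    by (rule bias_swap_ge_power2[OF assms(3) less_imp_le[OF assms(4)] hypothesis])
  moreover have "Vs ! q = Gblock n k j" "psi_prime r i j \<psi> = (\<lambda>ys. \<psi> ys - \<psi> (ys[i := ys ! q, q := ys ! i]))"
    using assms(8) by (simp_all add: Vs_def q_def nth_append fun_eq_iff psi_prime_def)
  ultimately have b: "bias (Vs[i := Gblock n k j]) (psi_prime r i j \<psi>) = of_real b" "\<xi>\<^sup>2 \<le> b"
    by simp_all
  moreover have "b \<le> 1"
    using norm_bias_le_1[of "Vs[i := Gblock n k j]" "psi_prime r i j \<psi>"] b(1) by (simp add: abs_le_iff)
  ultimately have "\<xi>\<^sup>2 \<le> 1"
    by simp
  with assms(4) have "\<xi> ^ 8 \<le> \<xi>\<^sup>2"
    by (intro power_decreasing) (auto simp: power_le_one_iff abs_square_le_1)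
  with b have "Im (bias (Vs[i := Gblock n k j]) (psi_prime r i j \<psi>)) = 0
      \<and> \<xi> ^ 8 \<le> Re (bias (Vs[i := Gblock n k j]) (psi_prime r i j \<psi>))"
    by simp
  then show ?thesis
    unfolding Let_def Vs_def .
qed

end
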